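(* Let $X$ be a Banach space, $T$ a nonempty index set, and $f_t:X\to\mathbb{R}\cup\{+\infty\}$ $(t\in T)$ functions that are lower semicontinuous with respect to the weak topology of $X$. Suppose that either all $f_t$ $(t\in T)$ are nonnegative, or $T$ is finite. Then the collection $\{f_t\}_{t\in T}$ is uniformly lower semicontinuous on every weakly compact subset $U$ of $X$, i.e., $\inf_{x\in U}\big(\overline{\sum_{t\in T}}f_t\big)(x)\le \Lambda_U(\{f_t\}_{t\in T})$.
   Context: Let $\mathcal{F}(T)$ be the family of finite subsets of $T$, directed by inclusion. For a net $\{\alpha_S\}_{S\in\mathcal{F}(T)}\subset[-\infty,+\infty]$: $\limsup_{S\uparrow T,|S|<\infty}\alpha_S:=\inf_{S_0\in\mathcal{F}(T)}\sup_{S\in\mathcal{F}(T),S_0\subset S}\alpha_S$ and $\liminf_{S\uparrow T,|S|<\infty}\alpha_S:=\sup_{S_0\in\mathcal{F}(T)}\inf_{S\in\mathcal{F}(T),S_0\subset S}\alpha_S$. The infinite sum is $\big(\overline{\sum_{t\in T}} f_t\big)(x):=\limsup_{S\uparrow T,|S|<\infty}\sum_{t\in S}f_t(x)$. For $U\subset X$, the uniform infimum is $\Lambda_U(\{f_t\}_{t\in T}):=\liminf_{S\uparrow T,|S|<\infty}\ \liminf_{\operatorname{diam}\{x_t\}_{t\in S}\to 0,\ x_t\in U\,(t\in S)}\ \sum_{t\in S}f_t(x_t)$, where the inner lower limit equals $\lim_{\delta\downarrow0}\inf\{\sum_{t\in S}f_t(x_t): x_t\in U\ (t\in S),\ \operatorname{diam}\{x_t\}_{t\in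 S}<\delta\}$ and $\operatorname{diam} A=\sup_{a,b\in A}\|a-b\|$. The collection is called uniformly lower semicontinuous on $U$ if $\inf_U\overline{\sum_{t\in T}}f_t\le\Lambda_U(\{f_t\}_{t\in T})$. Convention: $\inf\emptyset=+\infty$. *)

theory Defs
  imports "HOL-Analysis.Analysis"
begin

definition weak_topology :: "'a::real_normed_vector topology" where
  "weak_topology = topology_generated_by
     {{x. l x \<in> V} | (l :: 'a \<Rightarrow> real) V. bounded_linear l \<and> open V}"

definition lsc_wrt :: "'a topology \<Rightarrow> ('a \<Rightarrow> ereal) \<Rightarrow> bool" where
  "lsc_wrt tau g \<longleftrightarrow> (\<forall>c. openin tau {x \<in> topspace tau. c < g x})"

text \<open>Upper / lower limits of a net indexed by finite subsets of T, directed by inclusion.\<close>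
definition fin_limsup :: "'b set \<Rightarrow> ('b set \<Rightarrow> ereal) \<Rightarrow> ereal" where
  "fin_limsup T \<alpha> = (INF S0 \<in> {S. finite S \<and> S \<subseteq> T}.
      SUP S \<in> {S. finite S \<and> S \<subseteq> T \<and> S0 \<subseteq> S}. \<alpha> S)"

definition fin_liminf :: "'b set \<Rightarrow> ('b set \<Rightarrow> ereal) \<Rightarrow> ereal" where
  "fin_liminf T \<alpha> = (SUP S0 \<in> {S. finite S \<and> S \<subseteq> T}.
      INF S \<in> {S. finite S \<and> S \<subseteq> T \<and> S0 \<subseteq> S}. \<alpha> S)"

definition upper_sum :: "'b set \<Rightarrow> ('b \<Rightarrow> 'a \<Rightarrow> ereal) \<Rightarrow> 'a \<Rightarrow> ereal" where
  "upper_sum T f x = fin_limsup T (\<lambda>S. \<Sum>t\<in>S. f t x)"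

text \<open>Inner lower limit as diam of the points tends to 0:
  lim_{delta -> 0+} inf {sum_{t in S} f_t(x_t) : x_t in U, diam {x_t} < delta}.
  The infimum is monotone in delta, so the limit is the supremum over delta > 0.\<close>
definition diam_liminf :: "'a::real_normed_vector set \<Rightarrow> 'b set \<Rightarrow> ('b \<Rightarrow> 'a \<Rightarrow> ereal) \<Rightarrow> ereal" where
  "diam_liminf U S f = (SUP \<delta> \<in> {(0::real)<..}.
      INF xs \<in> {xs :: 'b \<Rightarrow> 'a. (\<forall>t\<in>S. xs t \<in> U) \<and> diameter (xs ` S) < \<delta>}.
        \<Sum>t\<in>S. f t (xs t))"

definition uniform_inf :: "'a::real_normed_vector set \<Rightarrow> 'b set \<Rightarrow> ('b \<Rightarrow> 'a \<Rightarrow> ereal) \<Rightarrow> ereal" where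
  "uniform_inf U T f = fin_liminf T (\<lambda>S. diam_liminf U S f)"

definition uniformly_lsc_on :: "'a::real_normed_vector set \<Rightarrow> 'b set \<Rightarrow> ('b \<Rightarrow> 'a \<Rightarrow> ereal) \<Rightarrow> bool" where
  "uniformly_lsc_on U T f \<longleftrightarrow> (INF x\<in>U. upper_sum T f x) \<le> uniform_inf U T f"

end

theory Submission
  imports Defs
begin

text \<open>Fix a real \<open>c\<close> below \<open>inf\<^sub>U \<Sigma> f\<^sub>t\<close>. Every \<open>x \<in> U\<close> has a finite partial sum (the full
  sum if \<open>T\<close> is finite) exceeding \<open>c\<close> at \<open>x\<close>. A weakly open set contains a norm ball of
  fixed radius around every point of some smaller weak neighbourhood, so weak lower
  semicontinuity keeps that partial sum above \<open>c\<close> at all families of points norm-close to a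
  weak neighbourhood \<open>W\<^sub>x\<close> of \<open>x\<close>. Weak compactness yields finitely many \<open>W\<^sub>x\<close> covering \<open>U\<close>
  with a common radius \<open>\<delta>\<close>; a family in \<open>U\<close> of diameter \<open>< \<delta>\<close> lies near one of them, and
  enlarging the index set does not decrease the sum since the \<open>f\<^sub>t\<close> are nonnegative (or
  no enlargement is possible since \<open>T\<close> is finite).\<close>

lemma topspace_weak_topology [simp]:
  "topspace (weak_topology :: 'a::real_normed_vector topology) = UNIV"
proof -
  have "(UNIV::'a set) \<in> {{x. l x \<in> V} | (l :: 'a \<Rightarrow> real) V. bounded_linear l \<and> open V}"
    by (intro CollectI exI[of _ "\<lambda>_. 0"] exI[of _ UNIV]) (simp add: bounded_linear_zero)
  then show ?thesis unfolding weak_topology_def topology_generated_by_topspace by blast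
qed

definition uniformly_weakly_open :: "'a::real_normed_vector set \<Rightarrow> bool" where
  "uniformly_weakly_open W \<longleftrightarrow>
     (\<forall>x\<in>W. \<exists>W' e. openin weak_topology W' \<and> x \<in> W' \<and> 0 < e \<and> (\<forall>y\<in>W'. ball y e \<subseteq> W))"

lemma uniformly_weakly_open_Int:
  assumes "uniformly_weakly_open A" "uniformly_weakly_open B"
  shows "uniformly_weakly_open (A \<inter> B)"
  unfolding uniformly_weakly_open_def
proof
  fix x assume "x \<in> A \<inter> B"
  then have "x \<in> A" "x \<in> B" by simp_all
  obtain WA eA where A: "openin weak_topology WA" "x \<in> WA" "0 < eA" "\<forall>y\<in>WA. ball y eA \<subseteq> A"
    using assms(1) \<open>x \<in> A\<close> unfolding uniformly_weakly_open_def by blast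
  obtain WB eB where B: "openin weak_topology WB" "x \<in> WB" "0 < eB" "\<forall>y\<in>WB. ball y eB \<subseteq> B"
    using assms(2) \<open>x \<in> B\<close> unfolding uniformly_weakly_open_def by blast
  have "ball y (min eA eB) \<subseteq> A \<inter> B" if "y \<in> WA \<inter> WB" for y
  proof -
    have "ball y (min eA eB) \<subseteq> ball y eA" "ball y (min eA eB) \<subseteq> ball y eB"
      by (simp_all add: subset_ball)
    with A(4) B(4) that show ?thesis by blast
  qed
  with A B show "\<exists>W' e. openin weak_topology W' \<and> x \<in> W' \<and> 0 < e \<and> (\<forall>y\<in>W'. ball y e \<subseteq> A \<inter> B)"
    by (intro exI[of _ "WA \<inter> WB"] exI[of _ "min eA eB"]) (simp add: openin_Int)
qed

lemma uniformly_weakly_open_Union: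
  assumes "\<And>A. A \<in> K \<Longrightarrow> uniformly_weakly_open A"
  shows "uniformly_weakly_open (\<Union>K)"
  unfolding uniformly_weakly_open_def
proof
  fix x assume "x \<in> \<Union>K"
  then obtain A where "A \<in> K" "x \<in> A" by blast
  from \<open>A \<in> K\<close> have "uniformly_weakly_open A" by (rule assms)
  with \<open>x \<in> A\<close> obtain W' e where W': "openin weak_topology W'" "x \<in> W'" "0 < e" "\<forall>y\<in>W'. ball y e \<subseteq> A"
    unfolding uniformly_weakly_open_def by blast
  have "\<forall>y\<in>W'. ball y e \<subseteq> \<Union>K"
    using W'(4) \<open>A \<in> K\<close> by blast
  with W'(1-3) show "\<exists>W' e. openin weak_topology W' \<and> x \<in> W' \<and> 0 < e \<and> (\<forall>y\<in>W'. ball y e \<subseteq> \<Union>K)"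
    by blast
qed

lemma uniformly_weakly_open_preimage:
  fixes l :: "'a::real_normed_vector \<Rightarrow> real"
  assumes l: "bounded_linear l" and V: "open V"
  shows "uniformly_weakly_open {x. l x \<in> V}"
  unfolding uniformly_weakly_open_def
proof
  obtain K where K: "0 < K" "\<And>z. norm (l z) \<le> norm z * K"
    using bounded_linear.pos_bounded[OF l] by blast
  fix x assume "x \<in> {x. l x \<in> V}"
  then obtain r where r: "0 < r" "ball (l x) r \<subseteq> V"
    using V open_contains_ball by blast
  define W' where "W' = {y. l y \<in> ball (l x) (r/2)}"
  have "openin weak_topology W'"
    unfolding weak_topology_def W'_def using l by (intro topology_generated_by_Basis) blast
  moreover have "ball y (r / (2*K)) \<subseteq> {x. l x \<in> V}" if "y \<in> W'" for y
  proof
    fix z assume z: "z \<in> ball y (r / (2*K))"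
    have "dist (l y) (l z) = norm (l (z - y))"
      by (simp add: dist_norm linear_diff[OF bounded_linear.linear[OF l]] norm_minus_commute)
    also have "\<dots> \<le> norm (z - y) * K" by (rule K(2))
    also have "\<dots> < r / 2"
      using z K by (simp add: dist_norm norm_minus_commute pos_less_divide_eq)
    finally have "dist (l x) (l z) < r"
      using that dist_triangle[of "l x" "l z" "l y"] unfolding W'_def by simp
    then show "z \<in> {x. l x \<in> V}" using r by auto
  qed
  moreover have "x \<in> W'" "0 < r / (2*K)"
    unfolding W'_def using r(1) K(1) by simp_all
  ultimately show "\<exists>W' e. openin weak_topology W' \<and> x \<in> W' \<and> 0 < e \<and> (\<forall>y\<in>W'. ball y e \<subseteq> {x. l x \<in> V})"
    by blast
qed

lemma openin_weak_topology_imp_uniformly_weakly_open: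
  assumes "openin weak_topology W"
  shows "uniformly_weakly_open W"
proof -
  have "generate_topology_on {{x. l x \<in> V} | (l :: 'a \<Rightarrow> real) V. bounded_linear l \<and> open V} W"
    using assms unfolding weak_topology_def by (rule openin_topology_generated_by)
  then show ?thesis
  proof (induction rule: generate_topology_on.induct)
    case Empty
    then show ?case by (simp add: uniformly_weakly_open_def)
  next
    case (Int a b)
    from Int.IH show ?case by (rule uniformly_weakly_open_Int)
  next
    case (UN K)
    from UN.IH show ?case by (rule uniformly_weakly_open_Union)
  next
    case (Basis s)
    then obtain l :: "'a \<Rightarrow> real" and V where "s = {x. l x \<in> V}" "bounded_linear l" "open V"
      by blast
    then show ?case by (simp add: uniformly_weakly_open_preimage)
  qed
qed

lemma sum_ereal_neq_MInfty:
  fixes a :: "'b \<Rightarrow> ereal"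
  assumes "finite S" "\<forall>t\<in>S. a t \<noteq> -\<infinity>"
  shows "sum a S \<noteq> -\<infinity>"
  using assms by (induction S rule: finite_induct) auto

lemma ereal_less_add_realE:
  fixes A B :: ereal
  assumes "A \<noteq> -\<infinity>" "B \<noteq> -\<infinity>" "ereal c < A + B"
  obtains a b where "ereal a < A" "ereal b < B" "c < a + b"
proof (cases A; cases B)
  fix x y assume "A = ereal x" "B = ereal y"
  with assms(3) have "c < x + y" by simp
  then show thesis using \<open>A = ereal x\<close> \<open>B = ereal y\<close>
    by (intro that[of "x - (x + y - c) / 3" "y - (x + y - c) / 3"]) (simp_all add: field_simps)
next
  fix x assume "A = ereal x" "B = \<infinity>"
  then show thesis by (intro that[of "x - 1" "c - x + 2"]) auto
next
  fix y assume "A = \<infinity>" "B = ereal y"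
  then show thesis by (intro that[of "c - y + 2" "y - 1"]) auto
next
  assume "A = \<infinity>" "B = \<infinity>"
  then show thesis by (intro that[of c 1]) auto
qed (use assms in auto)

lemma ereal_less_sum_realE:
  fixes a :: "'b \<Rightarrow> ereal"
  assumes "finite S" "\<forall>t\<in>S. a t \<noteq> -\<infinity>" "ereal c < sum a S"
  obtains b where "\<forall>t\<in>S. ereal (b t) < a t" "c < sum b S"
proof -
  have "\<exists>b. (\<forall>t\<in>S. ereal (b t) < a t) \<and> c < sum b S"
    using assms
  proof (induction S arbitrary: c rule: finite_induct)
    case empty
    then show ?case by simp
  next
    case (insert s S)
    then have "a s \<noteq> -\<infinity>" "sum a S \<noteq> -\<infinity>" "ereal c < a s + sum a S"
      by (simp_all add: sum_ereal_neq_MInfty)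
    then obtain c1 c2 where c12: "ereal c1 < a s" "ereal c2 < sum a S" "c < c1 + c2"
      by (rule ereal_less_add_realE)
    obtain b where b: "\<forall>t\<in>S. ereal (b t) < a t" "c2 < sum b S"
      using insert.IH[of c2] insert.prems(1) c12(2) by auto
    have "sum (b(s := c1)) S = sum b S"
      using insert.hyps(2) by (intro sum.cong) auto
    then have "sum (b(s := c1)) (insert s S) = c1 + sum b S"
      using insert.hyps by simp
    with b c12 insert.hyps show ?case
      by (intro exI[of _ "b(s := c1)"]) auto
  qed
  then show ?thesis using that by blast
qed

lemma weakly_lsc_sum_uniform_nhd:
  fixes f :: "'b \<Rightarrow> 'a::real_normed_vector \<Rightarrow> ereal"
  assumes "finite S" "\<forall>t\<in>S. lsc_wrt weak_topology (f t)" "\<forall>t\<in>S. f t x \<noteq> -\<infinity>"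
    and "ereal c < (\<Sum>t\<in>S. f t x)"
  obtains W e where "openin weak_topology W" "x \<in> W" "0 < e"
    "\<And>y zs. y \<in> W \<Longrightarrow> (\<forall>t\<in>S. zs t \<in> ball y e) \<Longrightarrow> ereal c < (\<Sum>t\<in>S. f t (zs t))"
proof -
  obtain b where b: "\<forall>t\<in>S. ereal (b t) < f t x" "c < sum b S"
    using ereal_less_sum_realE[of S "\<lambda>t. f t x" c] assms(1,3,4) by blast
  define V where "V = (\<Inter>t\<in>S. {z. ereal (b t) < f t z})"
  have "openin weak_topology {z. ereal (b t) < f t z}" if "t \<in> S" for t
    using assms(2) that unfolding lsc_wrt_def by simp
  then have "openin weak_topology V"
    unfolding V_def using openin_INT[OF assms(1), of weak_topology "\<lambda>t. {z. ereal (b t) < f t z}"]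
    by simp
  then have "uniformly_weakly_open V"
    by (rule openin_weak_topology_imp_uniformly_weakly_open)
  moreover have "x \<in> V"
    unfolding V_def using b(1) by simp
  ultimately obtain W e where W: "openin weak_topology W" "x \<in> W" "0 < e" "\<forall>y\<in>W. ball y e \<subseteq> V"
    unfolding uniformly_weakly_open_def by blast
  show thesis
  proof (rule that[OF W(1-3)])
    fix y zs assume "y \<in> W" "\<forall>t\<in>S. zs t \<in> ball y e"
    then have "\<forall>t\<in>S. ereal (b t) < f t (zs t)"
      using W(4) unfolding V_def by blast
    then have "(\<Sum>t\<in>S. ereal (b t)) \<le> (\<Sum>t\<in>S. f t (zs t))"
      by (intro sum_mono) (simp add: less_imp_le)
    moreover have "ereal c < (\<Sum>t\<in>S. ereal (b t))"
      using b(2) by simp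
    ultimately show "ereal c < (\<Sum>t\<in>S. f t (zs t))"
      by (rule order.strict_trans2[rotated])
  qed
qed

lemma compactin_finite_cover_uniform_radius:
  fixes e :: "'a \<Rightarrow> real"
  assumes "compactin X U" and "\<And>x. x \<in> U \<Longrightarrow> openin X (W x) \<and> x \<in> W x \<and> 0 < e x"
  obtains K \<delta> where "finite K" "K \<subseteq> U" "0 < \<delta>" "\<And>y. y \<in> U \<Longrightarrow> \<exists>x\<in>K. y \<in> W x \<and> \<delta> \<le> e x"
proof -
  have "\<forall>V\<in>W ` U. openin X V" "U \<subseteq> \<Union>(W ` U)"
    using assms(2) by auto
  then obtain F where F: "finite F" "F \<subseteq> W ` U" "U \<subseteq> \<Union>F"
    using assms(1) unfolding compactin_def by meson
  then obtain K where K: "finite K" "K \<subseteq> U" "F = W ` K"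
    by (meson finite_subset_image)
  show thesis
  proof (rule that[OF K(1,2)])
    show "0 < Min (insert 1 (e ` K))"
      using K assms(2) by auto
    show "\<exists>x\<in>K. y \<in> W x \<and> Min (insert 1 (e ` K)) \<le> e x" if y: "y \<in> U" for y
    proof -
      obtain x where "x \<in> K" "y \<in> W x"
        using y F(3) K(3) by blast
      moreover have "Min (insert 1 (e ` K)) \<le> e x"
        using K(1) \<open>x \<in> K\<close> by (intro Min_le) auto
      ultimately show ?thesis by blast
    qed
  qed
qed

lemma less_fin_limsupD:
  assumes "c < fin_limsup T \<alpha>" "finite S0" "S0 \<subseteq> T"
  obtains S where "finite S" "S0 \<subseteq> S" "S \<subseteq> T" "c < \<alpha> S"
proof -
  have "fin_limsup T \<alpha> \<le> (SUP S \<in> {S. finite S \<and> S \<subseteq> T \<and> S0 \<subseteq> S}. \<alpha> S)"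
    unfolding fin_limsup_def using assms(2,3) by (intro INF_lower) simp
  with assms(1) have "c < (SUP S \<in> {S. finite S \<and> S \<subseteq> T \<and> S0 \<subseteq> S}. \<alpha> S)"
    by (rule less_le_trans)
  then show thesis
    using that by (auto simp: less_SUP_iff)
qed

lemma uniform_inf_lower_bound:
  assumes "finite S0" "S0 \<subseteq> T" "0 < \<delta>"
    and "\<And>S xs. finite S \<Longrightarrow> S0 \<subseteq> S \<Longrightarrow> S \<subseteq> T \<Longrightarrow> (\<forall>t\<in>S. xs t \<in> U) \<Longrightarrow> diameter (xs ` S) < \<delta>
      \<Longrightarrow> c \<le> (\<Sum>t\<in>S. f t (xs t))"
  shows "c \<le> uniform_inf U T f"
proof -
  have "c \<le> diam_liminf U S f" if "finite S" "S0 \<subseteq> S" "S \<subseteq> T" for S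
  proof -
    have "c \<le> (INF xs \<in> {xs. (\<forall>t\<in>S. xs t \<in> U) \<and> diameter (xs ` S) < \<delta>}. \<Sum>t\<in>S. f t (xs t))"
      using assms(4) that by (intro INF_greatest) blast
    also have "\<dots> \<le> diam_liminf U S f"
      unfolding diam_liminf_def using assms(3) by (intro SUP_upper) simp
    finally show ?thesis .
  qed
  then have "c \<le> (INF S \<in> {S. finite S \<and> S \<subseteq> T \<and> S0 \<subseteq> S}. diam_liminf U S f)"
    by (intro INF_greatest) blast
  also have "\<dots> \<le> uniform_inf U T f"
    unfolding uniform_inf_def fin_liminf_def using assms(1,2) by (intro SUP_upper) simp
  finally show ?thesis .
qed

lemma less_upper_sumE:
  assumes "c < upper_sum T f x"
  obtains S where "finite S" "S \<subseteq> T" "finite T \<Longrightarrow> S = T" "c < (\<Sum>t\<in>S. f t x)"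
proof -
  obtain S where "finite S" "(if finite T then T else {}) \<subseteq> S" "S \<subseteq> T" "c < (\<Sum>t\<in>S. f t x)"
    using assms unfolding upper_sum_def
    by (rule less_fin_limsupD[of _ _ _ "if finite T then T else {}"]) auto
  then show thesis
    using that by (auto split: if_splits)
qed

lemma sum_le_sum_superset:
  fixes g :: "'b \<Rightarrow> 'c::ordered_comm_monoid_add"
  assumes "(\<forall>t\<in>T. 0 \<le> g t) \<or> S = T" "S \<subseteq> S'" "S' \<subseteq> T" "finite S'"
  shows "sum g S \<le> sum g S'"
  using assms by (auto intro: sum_mono2)

lemma weakly_compact_uniform_inf_lower_bound:
  fixes f :: "'b \<Rightarrow> 'a::real_normed_vector \<Rightarrow> ereal"
  assumes U: "compactin weak_topology U" and t0: "t0 \<in> T"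
    and lsc: "\<forall>t\<in>T. lsc_wrt weak_topology (f t)" and not_MInfty: "\<forall>t\<in>T. \<forall>x. f t x \<noteq> -\<infinity>"
    and mono: "(\<forall>t\<in>T. \<forall>x. 0 \<le> f t x) \<or> finite T"
    and witness: "\<And>x. x \<in> U \<Longrightarrow> \<exists>S. finite S \<and> S \<subseteq> T \<and> (finite T \<longrightarrow> S = T) \<and> ereal c < (\<Sum>t\<in>S. f t x)"
  shows "ereal c \<le> uniform_inf U T f"
proof -
  obtain Sx where Sx: "\<And>x. x \<in> U \<Longrightarrow> finite (Sx x) \<and> Sx x \<subseteq> T \<and> (finite T \<longrightarrow> Sx x = T) \<and>
      ereal c < (\<Sum>t\<in>Sx x. f t x)"
    using witness by metis
  have "\<exists>W e. openin weak_topology W \<and> x \<in> W \<and> 0 < e \<and>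
      (\<forall>y\<in>W. \<forall>zs. (\<forall>t\<in>Sx x. zs t \<in> ball y e) \<longrightarrow> ereal c < (\<Sum>t\<in>Sx x. f t (zs t)))" if "x \<in> U" for x
  proof -
    have "finite (Sx x)" "\<forall>t\<in>Sx x. lsc_wrt weak_topology (f t)" "\<forall>t\<in>Sx x. f t x \<noteq> -\<infinity>"
      "ereal c < (\<Sum>t\<in>Sx x. f t x)"
      using Sx[OF that] lsc not_MInfty by auto
    then show ?thesis
      by (rule weakly_lsc_sum_uniform_nhd) blast
  qed
  then obtain W e where W: "\<And>x. x \<in> U \<Longrightarrow> openin weak_topology (W x) \<and> x \<in> W x \<and> 0 < e x \<and>
      (\<forall>y\<in>W x. \<forall>zs. (\<forall>t\<in>Sx x. zs t \<in> ball y (e x)) \<longrightarrow> ereal c < (\<Sum>t\<in>Sx x. f t (zs t)))"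
    by metis
  obtain K \<delta> where K: "finite K" "K \<subseteq> U" "0 < \<delta>" "\<And>y. y \<in> U \<Longrightarrow> \<exists>x\<in>K. y \<in> W x \<and> \<delta> \<le> e x"
    using compactin_finite_cover_uniform_radius[OF U, of W e] W by blast
  \<comment> \<open>\<open>t0\<close> provides every admissible family with a base point \<open>xs t0 \<in> U\<close>\<close>
  show ?thesis
  proof (rule uniform_inf_lower_bound[of "insert t0 (\<Union>x\<in>K. Sx x)" T \<delta>])
    show "finite (insert t0 (\<Union>x\<in>K. Sx x))" "insert t0 (\<Union>x\<in>K. Sx x) \<subseteq> T"
      using K(1,2) Sx t0 by auto
    fix S xs
    assume S: "finite S" "insert t0 (\<Union>x\<in>K. Sx x) \<subseteq> S" "S \<subseteq> T"
      and xs: "\<forall>t\<in>S. xs t \<in> U" "diameter (xs ` S) < \<delta>"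
    have "xs t0 \<in> U" using xs(1) S(2) by blast
    then obtain x where x: "x \<in> K" "xs t0 \<in> W x" "\<delta> \<le> e x"
      using K(4) by blast
    have "Sx x \<subseteq> S" using S(2) x(1) by blast
    have "dist (xs t0) (xs t) \<le> diameter (xs ` S)" if "t \<in> S" for t
      using S(1,2) that by (intro diameter_bounded_bound) auto
    then have "\<forall>t\<in>Sx x. xs t \<in> ball (xs t0) (e x)"
      using \<open>Sx x \<subseteq> S\<close> xs(2) x(3) by fastforce
    then have "ereal c < (\<Sum>t\<in>Sx x. f t (xs t))"
      using W x K(2) by blast
    also have "\<dots> \<le> (\<Sum>t\<in>S. f t (xs t))"
      using mono Sx[of x] x(1) K(2) \<open>Sx x \<subseteq> S\<close> S(1,3) by (intro sum_le_sum_superset) auto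
    finally show "ereal c \<le> (\<Sum>t\<in>S. f t (xs t))" by (rule less_imp_le)
  qed (use K(3) in simp)
qed

theorem proposition2p3:
  fixes T :: "'b set" and f :: "'b \<Rightarrow> 'a::banach \<Rightarrow> ereal" and U :: "'a set"
  assumes "T \<noteq> {}"
    and "\<forall>t\<in>T. \<forall>x. f t x \<noteq> -\<infinity>"
    and "\<forall>t\<in>T. lsc_wrt weak_topology (f t)"
    and "(\<forall>t\<in>T. \<forall>x. 0 \<le> f t x) \<or> finite T"
    and "compactin weak_topology U"
  shows "uniformly_lsc_on U T f"
  unfolding uniformly_lsc_on_def
proof (rule dense_le)
  obtain t0 where "t0 \<in> T" using assms(1) by blast
  fix y assume "y < (INF x\<in>U. upper_sum T f x)"
  then obtain c where c: "y < ereal c" "ereal c < (INF x\<in>U. upper_sum T f x)"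
    using ereal_dense2 by blast
  have "\<exists>S. finite S \<and> S \<subseteq> T \<and> (finite T \<longrightarrow> S = T) \<and> ereal c < (\<Sum>t\<in>S. f t x)" if "x \<in> U" for x
  proof -
    have "ereal c < upper_sum T f x"
      using c(2) that by (meson INF_lower less_le_trans)
    then show ?thesis
      by (rule less_upper_sumE) blast
  qed
  then have "ereal c \<le> uniform_inf U T f"
    by (rule weakly_compact_uniform_inf_lower_bound[OF assms(5) \<open>t0 \<in> T\<close> assms(3,2,4)])
  with c(1) show "y \<le> uniform_inf U T f"
    by simp
qed

end
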